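(* Let $G$ be a graph, $q\in\mathcal Q(G)$, $F$ a graph and $\varphi\in\mathsf{Hom}(F,G)$. For each $n\ge1$ let $T_n$ be the graph whose vertices are the pairs $(x,i)$ with $x\in V_G$ and $i$ a function from $\{A\subseteq V_G: x\in A\}$ to $\{0,1,2,\dots\}$ satisfying $i(A)<n^{q(A)}$ for all such $A$, with an edge from $(x,i)$ to $(y,j)$ iff $(x,y)\in E_G$ and $i(A)=j(A)$ for all $A$ with $\{x,y\}\subseteq A\subseteq V_G$. Let $\pi_n:T_n\to G$ be $\pi_n(x,i)=x$ and let $\hom_\varphi(F,T_n)$ be the number of homomorphisms $\psi:F\to T_n$ with $\pi_n\circ\psi=\varphi$. Then \[ \lim_{n\to\infty}\log_n\hom_\varphi(F,T_n)=\sum_{A\subseteq V_G} q(A)\cdot\mathsf{CC}\big(F|_{\varphi^{-1}(A)}\big). \]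
   Context: Graphs are finite directed graphs $G=(V_G,E_G)$ with $V_G$ nonempty finite and $E_G\subseteq V_G\times V_G$. Homomorphisms are vertex maps sending edges to edges; $\mathsf{Hom}(F,G)$ is their set. $F|_B$ is the induced subgraph on $B$ and $\mathsf{CC}$ the number of connected components ignoring edge directions, with $\mathsf{CC}(F|_\emptyset)=0$. $\mathcal Q(G)$ is the set of functions $q:\wp(V_G)\to\mathbb R$ with $q(\emptyset)=0$, $q(A)\ge0$ for all $A$, and $\sum_{A\subseteq V_G}q(A)\,\mathsf{CC}(G|_A)=1$. *)

theory Defs
  imports "HOL-Analysis.Analysis"
begin

definition is_graph :: "'a set \<Rightarrow> ('a \<times> 'a) set \<Rightarrow> bool" where
  "is_graph V E \<longleftrightarrow> finite V \<and> V \<noteq> {} \<and> E \<subseteq> V \<times> V"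

definition homs :: "'b set \<Rightarrow> ('b \<times> 'b) set \<Rightarrow> 'a set \<Rightarrow> ('a \<times> 'a) set \<Rightarrow> ('b \<Rightarrow> 'a) set" where
  "homs VF EF VG EG = {f \<in> VF \<rightarrow>\<^sub>E VG. \<forall>(u,v) \<in> EF. (f u, f v) \<in> EG}"

text \<open>Number of connected components (ignoring directions) of the subgraph of (V,E)
  induced on B; it is 0 for B empty.\<close>
definition CC :: "('a \<times> 'a) set \<Rightarrow> 'a set \<Rightarrow> nat" where
  "CC E B = card (B // (((E \<inter> (B \<times> B)) \<union> (E \<inter> (B \<times> B))\<inverse>)\<^sup>*))"

definition Qset :: "'a set \<Rightarrow> ('a \<times> 'a) set \<Rightarrow> ('a set \<Rightarrow> real) set" where
  "Qset V E = {q. q {} = 0 \<and> (\<forall>A \<subseteq> V. q A \<ge> 0)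
      \<and> (\<Sum>A\<in>Pow V. q A * real (CC E A)) = 1}"

definition TV :: "'a set \<Rightarrow> ('a set \<Rightarrow> real) \<Rightarrow> nat \<Rightarrow> ('a \<times> ('a set \<Rightarrow> nat)) set" where
  "TV V q n = {(x, i). x \<in> V \<and> i \<in> extensional {A. A \<subseteq> V \<and> x \<in> A}
      \<and> (\<forall>A. A \<subseteq> V \<and> x \<in> A \<longrightarrow> real (i A) < real n powr q A)}"

definition TE :: "'a set \<Rightarrow> ('a \<times> 'a) set \<Rightarrow> ('a set \<Rightarrow> real) \<Rightarrow> nat
    \<Rightarrow> (('a \<times> ('a set \<Rightarrow> nat)) \<times> ('a \<times> ('a set \<Rightarrow> nat))) set" where
  "TE V E q n = {((x, i), (y, j)). (x, i) \<in> TV V q n \<and> (y, j) \<in> TV V q n \<and> (x, y) \<in> E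
      \<and> (\<forall>A. {x, y} \<subseteq> A \<and> A \<subseteq> V \<longrightarrow> i A = j A)}"

definition hom_over :: "'b set \<Rightarrow> ('b \<times> 'b) set \<Rightarrow> 'a set \<Rightarrow> ('a \<times> 'a) set
    \<Rightarrow> ('a set \<Rightarrow> real) \<Rightarrow> ('b \<Rightarrow> 'a) \<Rightarrow> nat \<Rightarrow> nat" where
  "hom_over VF EF V E q \<phi> n =
     card {\<psi> \<in> homs VF EF (TV V q n) (TE V E q n). \<forall>v \<in> VF. fst (\<psi> v) = \<phi> v}"

end

theory Submission
  imports Defs
begin

text \<open>
  A homomorphism \<psi> : F \<rightarrow> T_n lying over \<phi> consists of the vertices
  \<psi>(v) = (\<phi>(v), i_v); for a fixed A \<subseteq> V_G the labels v \<mapsto> i_v(A) live on the fibre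
  \<phi>\<inverse>(A), take values in {k. k < n^q(A)}, and the edge condition of T_n says exactly that
  they agree along the edges of F inside the fibre. Different sets A do not interact, so
  hom_\<phi>(F, T_n) is the product over A of the number of such labellings, which is
  |{k. k < n^q(A)}| ^ CC(F|\<phi>\<inverse>(A)). Taking log_n turns the product into a sum, and
  log_n |{k. k < n^x}| \<rightarrow> x because that set has between n^x and 2 n^x elements.
\<close>

section \<open>Colourings that are constant along edges\<close>

lemma rtrancl_symclosure_stays:
  assumes "S \<subseteq> B \<times> B" "(x, y) \<in> (S \<union> S\<inverse>)\<^sup>*" "x \<in> B"
  shows "y \<in> B"
  using assms(2,3) by (induction rule: rtrancl_induct) (use assms(1) in auto)

lemma constant_along_rtrancl_symclosure:
  assumes "\<forall>(u, v) \<in> S. f u = f v" "(x, y) \<in> (S \<union> S\<inverse>)\<^sup>*"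
  shows "f x = f y"
  using assms(2) by (induction rule: rtrancl_induct) (use assms(1) in auto)

lemma equiv_rtrancl_symclosure: "equiv UNIV ((S \<union> S\<inverse>)\<^sup>*)"
proof -
  have "sym ((S \<union> S\<inverse>)\<^sup>*)" by (intro sym_rtrancl) (auto simp: sym_def)
  then show ?thesis by (auto simp: equiv_def refl_on_def trans_rtrancl)
qed

text \<open>Counting K-colourings of a finite graph (B, S) that are constant along edges: they
  correspond to arbitrary colourings of its connected components, so there are
  |K| ^ (number of components) of them.\<close>
lemma card_edge_constant_colourings:
  assumes "finite B" "S \<subseteq> B \<times> B"
  shows "card {f \<in> B \<rightarrow>\<^sub>E K. \<forall>(u, v) \<in> S. f u = f v} = card K ^ card (B // (S \<union> S\<inverse>)\<^sup>*)"
proof -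
  define R where "R = (S \<union> S\<inverse>)\<^sup>*"
  define Col where "Col = {f \<in> B \<rightarrow>\<^sub>E K. \<forall>(u, v) \<in> S. f u = f v}"
  define spread where "spread h = (\<lambda>v\<in>B. h (R `` {v}))" for h :: "'a set \<Rightarrow> 'b"
  define collect where "collect f = (\<lambda>C\<in>B // R. the_elem (f ` C))" for f :: "'a \<Rightarrow> 'b"
  have equiv: "equiv UNIV R" unfolding R_def by (rule equiv_rtrancl_symclosure)
  have class_sub: "R `` {x} \<subseteq> B" if "x \<in> B" for x
    using rtrancl_symclosure_stays[OF assms(2)] that unfolding R_def by blast
  have class_eq: "R `` {w} = R `` {x}" if "w \<in> R `` {x}" for w x
    using equiv_class_eq[OF equiv, of x w] that by simp
  have collect_class: "collect f (R `` {x}) = f x" if "f \<in> Col" "x \<in> B" for f x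
  proof -
    have "the_elem (f ` (R `` {x})) = f x"
    proof (rule the_elem_image_unique)
      show "R `` {x} \<noteq> {}" using equiv by (auto simp: equiv_def refl_on_def)
      show "f w = f x" if "w \<in> R `` {x}" for w
        using constant_along_rtrancl_symclosure[of S f x w] \<open>f \<in> Col\<close> that
        unfolding Col_def R_def by auto
    qed
    then show ?thesis using \<open>x \<in> B\<close> unfolding collect_def by (auto intro: quotientI)
  qed
  have "bij_betw spread (B // R \<rightarrow>\<^sub>E K) Col"
  proof (rule bij_betw_byWitness[where f' = collect])
    show "\<forall>h \<in> B // R \<rightarrow>\<^sub>E K. collect (spread h) = h"
    proof
      fix h assume h: "h \<in> B // R \<rightarrow>\<^sub>E K"
      have "collect (spread h) C = h C" if "C \<in> B // R" for C
      proof -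
        obtain x where x: "x \<in> B" "C = R `` {x}" using \<open>C \<in> B // R\<close> by (auto elim: quotientE)
        have "the_elem (spread h ` C) = h C"
        proof (rule the_elem_image_unique)
          show "C \<noteq> {}" using x equiv by (auto simp: equiv_def refl_on_def)
          show "spread h w = h C" if "w \<in> C" for w
            using that x class_sub class_eq unfolding spread_def by auto
        qed
        then show ?thesis using that unfolding collect_def by simp
      qed
      then show "collect (spread h) = h"
        using h by (intro extensionalityI[of _ "B // R"]) (auto simp: collect_def PiE_def)
    qed
    show "\<forall>f \<in> Col. spread (collect f) = f"
      using collect_class by (auto simp: spread_def Col_def PiE_def extensional_def)
    show "spread ` (B // R \<rightarrow>\<^sub>E K) \<subseteq> Col"
    proof
      fix f assume "f \<in> spread ` (B // R \<rightarrow>\<^sub>E K)"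
      then obtain h where h: "h \<in> B // R \<rightarrow>\<^sub>E K" and f: "f = spread h" by blast
      have "f \<in> B \<rightarrow>\<^sub>E K" using h unfolding f spread_def by (auto intro: quotientI)
      moreover have "f u = f v" if "(u, v) \<in> S" for u v
      proof -
        have "(u, v) \<in> R" using that unfolding R_def by blast
        then have "R `` {u} = R `` {v}" by (rule equiv_class_eq[OF equiv])
        then show ?thesis using that assms(2) unfolding f spread_def by auto
      qed
      ultimately show "f \<in> Col" unfolding Col_def by blast
    qed
    show "collect ` Col \<subseteq> B // R \<rightarrow>\<^sub>E K"
      using collect_class by (auto simp: collect_def Col_def elim!: quotientE)
  qed
  then have "card Col = card (B // R \<rightarrow>\<^sub>E K)" by (rule bij_betw_same_card[symmetric])
  also have "\<dots> = card K ^ card (B // R)"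
  proof -
    have "B // R \<subseteq> Pow B" using class_sub by (auto elim!: quotientE)
    then have "finite (B // R)" using assms(1) by (rule finite_subset[OF _ finite_Pow_iff[THEN iffD2]])
    then show ?thesis by (simp add: card_PiE)
  qed
  finally show ?thesis unfolding Col_def R_def .
qed

section \<open>The vertices and edges of T_n\<close>

definition levels :: "nat \<Rightarrow> real \<Rightarrow> nat set" where
  "levels n x = {k. real k < real n powr x}"

lemma TV_iff:
  "(x, i) \<in> TV V q n \<longleftrightarrow> x \<in> V \<and> i \<in> (\<Pi>\<^sub>E A \<in> {A. A \<subseteq> V \<and> x \<in> A}. levels n (q A))"
  by (auto simp: TV_def levels_def PiE_def)

lemma TE_iff:
  "(a, b) \<in> TE V E q n \<longleftrightarrow> a \<in> TV V q n \<and> b \<in> TV V q n \<and> (fst a, fst b) \<in> E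
     \<and> (\<forall>A. {fst a, fst b} \<subseteq> A \<and> A \<subseteq> V \<longrightarrow> snd a A = snd b A)"
  by (cases a; cases b) (simp add: TE_def)

section \<open>Counting the homomorphisms over \<phi>\<close>

context
  fixes VG :: "'a set" and EG :: "('a \<times> 'a) set"
    and VF :: "'b set" and EF :: "('b \<times> 'b) set"
    and q :: "'a set \<Rightarrow> real" and \<phi> :: "'b \<Rightarrow> 'a" and n :: nat
begin

definition lifts :: "('b \<Rightarrow> 'a \<times> ('a set \<Rightarrow> nat)) set" where
  "lifts = {\<psi> \<in> homs VF EF (TV VG q n) (TE VG EG q n). \<forall>v \<in> VF. fst (\<psi> v) = \<phi> v}"

definition fibre :: "'a set \<Rightarrow> 'b set" where
  "fibre A = \<phi> -` A \<inter> VF"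

definition fibre_colourings :: "'a set \<Rightarrow> ('b \<Rightarrow> nat) set" where
  "fibre_colourings A =
     {f \<in> fibre A \<rightarrow>\<^sub>E levels n (q A). \<forall>(u, v) \<in> EF \<inter> fibre A \<times> fibre A. f u = f v}"

definition labels_of :: "('b \<Rightarrow> 'a \<times> ('a set \<Rightarrow> nat)) \<Rightarrow> 'a set \<Rightarrow> 'b \<Rightarrow> nat" where
  "labels_of \<psi> = (\<lambda>A \<in> Pow VG. \<lambda>v \<in> fibre A. snd (\<psi> v) A)"

definition lift_of :: "('a set \<Rightarrow> 'b \<Rightarrow> nat) \<Rightarrow> 'b \<Rightarrow> 'a \<times> ('a set \<Rightarrow> nat)" where
  "lift_of g = (\<lambda>v \<in> VF. (\<phi> v, \<lambda>A. if A \<subseteq> VG \<and> \<phi> v \<in> A then g A v else undefined))"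

lemma lift_at:
  assumes "\<psi> \<in> lifts" "v \<in> VF"
  shows "fst (\<psi> v) = \<phi> v"
    and "snd (\<psi> v) \<in> (\<Pi>\<^sub>E A \<in> {A. A \<subseteq> VG \<and> \<phi> v \<in> A}. levels n (q A))"
proof -
  have vertex: "\<psi> v \<in> TV VG q n" and over: "fst (\<psi> v) = \<phi> v"
    using assms unfolding lifts_def homs_def by auto
  show "fst (\<psi> v) = \<phi> v" by (fact over)
  show "snd (\<psi> v) \<in> (\<Pi>\<^sub>E A \<in> {A. A \<subseteq> VG \<and> \<phi> v \<in> A}. levels n (q A))"
  proof -
    have "(\<phi> v, snd (\<psi> v)) \<in> TV VG q n" using vertex by (simp add: over[symmetric])
    then show ?thesis unfolding TV_iff by blast
  qed
qed

lemma labels_of_lift: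
  assumes "\<psi> \<in> lifts"
  shows "labels_of \<psi> \<in> (\<Pi>\<^sub>E A \<in> Pow VG. fibre_colourings A)"
proof -
  have "(\<lambda>v \<in> fibre A. snd (\<psi> v) A) \<in> fibre_colourings A" if "A \<subseteq> VG" for A
  proof -
    have "snd (\<psi> v) A \<in> levels n (q A)" if "v \<in> fibre A" for v
      using lift_at(2)[OF assms, of v] that \<open>A \<subseteq> VG\<close> unfolding fibre_def by auto
    moreover have "snd (\<psi> u) A = snd (\<psi> v) A" if "(u, v) \<in> EF" "u \<in> fibre A" "v \<in> fibre A" for u v
    proof -
      have "(\<psi> u, \<psi> v) \<in> TE VG EG q n" using assms that(1) unfolding lifts_def homs_def by auto
      moreover have "fst (\<psi> u) = \<phi> u" "fst (\<psi> v) = \<phi> v"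
        using lift_at(1)[OF assms] that(2,3) unfolding fibre_def by auto
      ultimately show ?thesis using that(2,3) \<open>A \<subseteq> VG\<close> unfolding TE_iff fibre_def by auto
    qed
    ultimately show ?thesis unfolding fibre_colourings_def by auto
  qed
  then show ?thesis unfolding labels_of_def by auto
qed

text \<open>Conversely, a family of fibrewise colourings constant along edges reassembles into a
  homomorphism over \<phi>; this uses that \<phi> maps edges of F to edges of G.\<close>
lemma lift_of_labels:
  assumes "\<phi> \<in> homs VF EF VG EG" "EF \<subseteq> VF \<times> VF"
    and g: "g \<in> (\<Pi>\<^sub>E A \<in> Pow VG. fibre_colourings A)"
  shows "lift_of g \<in> lifts"
proof -
  define label where "label v = (\<lambda>A. if A \<subseteq> VG \<and> \<phi> v \<in> A then g A v else undefined)" for v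
  have at: "lift_of g v = (\<phi> v, label v)" if "v \<in> VF" for v
    using that unfolding lift_of_def label_def by simp
  have colouring: "g A \<in> fibre_colourings A" if "A \<subseteq> VG" for A
    using g that by auto
  have vertex: "lift_of g v \<in> TV VG q n" if "v \<in> VF" for v
  proof -
    have "g A v \<in> levels n (q A)" if "A \<subseteq> VG" "\<phi> v \<in> A" for A
      using colouring[OF that(1)] that(2) \<open>v \<in> VF\<close> unfolding fibre_colourings_def fibre_def by auto
    then have "label v \<in> (\<Pi>\<^sub>E A \<in> {A. A \<subseteq> VG \<and> \<phi> v \<in> A}. levels n (q A))"
      unfolding label_def PiE_iff extensional_def by auto
    moreover have "\<phi> v \<in> VG" using assms(1) that unfolding homs_def by auto
    ultimately show ?thesis unfolding at[OF that] TV_iff by blast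
  qed
  have edge: "(lift_of g u, lift_of g v) \<in> TE VG EG q n" if "(u, v) \<in> EF" for u v
  proof -
    have uv: "u \<in> VF" "v \<in> VF" "(\<phi> u, \<phi> v) \<in> EG"
      using assms(1,2) that unfolding homs_def by auto
    have "label u A = label v A" if "{\<phi> u, \<phi> v} \<subseteq> A \<and> A \<subseteq> VG" for A
    proof -
      have "u \<in> fibre A" "v \<in> fibre A" using that uv unfolding fibre_def by auto
      then have "g A u = g A v"
        using colouring[of A] that \<open>(u, v) \<in> EF\<close> unfolding fibre_colourings_def by auto
      then show ?thesis using that unfolding label_def by simp
    qed
    then show ?thesis using vertex[OF uv(1)] vertex[OF uv(2)] uv(3)
      unfolding TE_iff at[OF uv(1)] at[OF uv(2)] by simp
  qed
  have "lift_of g \<in> VF \<rightarrow>\<^sub>E TV VG q n"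
    using vertex unfolding lift_of_def PiE_iff by simp
  moreover have "\<forall>v \<in> VF. fst (lift_of g v) = \<phi> v" using at by simp
  ultimately show ?thesis using edge unfolding lifts_def homs_def by blast
qed

lemma lift_of_labels_of:
  assumes "\<psi> \<in> lifts"
  shows "lift_of (labels_of \<psi>) = \<psi>"
proof
  fix v
  show "lift_of (labels_of \<psi>) v = \<psi> v"
  proof (cases "v \<in> VF")
    case True
    have ext: "snd (\<psi> v) \<in> extensional {A. A \<subseteq> VG \<and> \<phi> v \<in> A}"
      using lift_at(2)[OF assms True] by (simp add: PiE_iff)
    have "(\<lambda>A. if A \<subseteq> VG \<and> \<phi> v \<in> A then labels_of \<psi> A v else undefined) = snd (\<psi> v)"
    proof
      fix A
      show "(if A \<subseteq> VG \<and> \<phi> v \<in> A then labels_of \<psi> A v else undefined) = snd (\<psi> v) A"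
      proof (cases "A \<subseteq> VG \<and> \<phi> v \<in> A")
        case False
        then have "snd (\<psi> v) A = undefined" by (intro extensional_arb[OF ext]) simp
        with False show ?thesis by auto
      qed (use True in \<open>simp add: labels_of_def fibre_def\<close>)
    qed
    then have "lift_of (labels_of \<psi>) v = (\<phi> v, snd (\<psi> v))" using True unfolding lift_of_def by simp
    then show ?thesis using lift_at(1)[OF assms True] by (simp add: prod_eq_iff)
  next
    case False
    have "\<psi> \<in> extensional VF" using assms unfolding lifts_def homs_def by (auto simp: PiE_def)
    then have "\<psi> v = undefined" using False by (rule extensional_arb)
    then show ?thesis using False unfolding lift_of_def by simp
  qed
qed

lemma labels_of_lift_of:
  assumes "g \<in> (\<Pi>\<^sub>E A \<in> Pow VG. fibre_colourings A)"
  shows "labels_of (lift_of g) = g"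
proof (rule extensionalityI[of _ "Pow VG"])
  fix A assume "A \<in> Pow VG"
  then have "g A \<in> fibre A \<rightarrow>\<^sub>E levels n (q A)"
    using assms unfolding fibre_colourings_def by auto
  then show "labels_of (lift_of g) A = g A"
    using \<open>A \<in> Pow VG\<close> by (auto simp: labels_of_def lift_of_def fibre_def PiE_def extensional_def)
qed (use assms in \<open>auto simp: labels_of_def PiE_def\<close>)

lemma hom_over_eq_prod:
  assumes "finite VG" "finite VF" "EF \<subseteq> VF \<times> VF" "\<phi> \<in> homs VF EF VG EG"
  shows "hom_over VF EF VG EG q \<phi> n =
           (\<Prod>A \<in> Pow VG. card (levels n (q A)) ^ CC EF (\<phi> -` A \<inter> VF))"
proof -
  have "bij_betw labels_of lifts (\<Pi>\<^sub>E A \<in> Pow VG. fibre_colourings A)"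
  proof (rule bij_betw_byWitness[where f' = lift_of])
    show "\<forall>\<psi> \<in> lifts. lift_of (labels_of \<psi>) = \<psi>" using lift_of_labels_of by blast
    show "\<forall>g \<in> \<Pi>\<^sub>E A \<in> Pow VG. fibre_colourings A. labels_of (lift_of g) = g"
      using labels_of_lift_of by blast
    show "labels_of ` lifts \<subseteq> (\<Pi>\<^sub>E A \<in> Pow VG. fibre_colourings A)" using labels_of_lift by blast
    show "lift_of ` (\<Pi>\<^sub>E A \<in> Pow VG. fibre_colourings A) \<subseteq> lifts"
      using lift_of_labels[OF assms(4,3)] by blast
  qed
  then have "hom_over VF EF VG EG q \<phi> n = card (\<Pi>\<^sub>E A \<in> Pow VG. fibre_colourings A)"
    unfolding hom_over_def lifts_def[symmetric] by (rule bij_betw_same_card)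
  also have "\<dots> = (\<Prod>A \<in> Pow VG. card (fibre_colourings A))"
    using assms(1) by (simp add: card_PiE)
  also have "\<dots> = (\<Prod>A \<in> Pow VG. card (levels n (q A)) ^ CC EF (\<phi> -` A \<inter> VF))"
    using assms(2) by (intro prod.cong refl)
      (simp add: fibre_colourings_def card_edge_constant_colourings CC_def fibre_def)
  finally show ?thesis .
qed

end

section \<open>Asymptotics of the number of levels\<close>

lemma levels_eq: "levels n x = {..< nat \<lceil>real n powr x\<rceil>}"
proof -
  have "real k < real n powr x \<longleftrightarrow> k < nat \<lceil>real n powr x\<rceil>" for k
    using less_ceiling_iff[of "int k" "real n powr x"] by linarith
  then show ?thesis unfolding levels_def by auto
qed

text \<open>For n \<ge> 1 and x \<ge> 0 there are between n^x and 2 n^x levels, since n^x \<ge> 1.\<close>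
lemma card_levels_bounds:
  assumes "n \<ge> 1" "x \<ge> 0"
  shows "real n powr x \<le> real (card (levels n x))"
    and "real (card (levels n x)) \<le> 2 * real n powr x"
proof -
  define y where "y = real n powr x"
  have "y \<ge> 1" unfolding y_def using assms by (intro ge_one_powr_ge_zero) auto
  then have card: "real (card (levels n x)) = real_of_int \<lceil>y\<rceil>"
    unfolding levels_eq y_def[symmetric] by simp
  show "real n powr x \<le> real (card (levels n x))"
    unfolding card y_def[symmetric] by (rule le_of_int_ceiling)
  show "real (card (levels n x)) \<le> 2 * real n powr x"
    using of_int_ceiling_le_add_one[of y] \<open>y \<ge> 1\<close> unfolding card y_def[symmetric] by linarith
qed

text \<open>Consequently log_n |levels n x| = x + O(1 / ln n), which tends to x.\<close>
lemma log_card_levels_tendsto: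
  assumes "x \<ge> 0"
  shows "(\<lambda>n. log (real n) (real (card (levels n x)))) \<longlonglongrightarrow> x"
proof (rule tendsto_sandwich[where f = "\<lambda>n. x" and h = "\<lambda>n. x + ln 2 / ln (real n)"])
  have "(\<lambda>n. ln 2 / ln (real n)) \<longlonglongrightarrow> 0"
    by (rule tendsto_divide_0[OF tendsto_const filterlim_at_top_imp_at_infinity])
      (rule filterlim_compose[OF ln_at_top filterlim_real_sequentially])
  then show "(\<lambda>n. x + ln 2 / ln (real n)) \<longlonglongrightarrow> x"
    using tendsto_add[OF tendsto_const, of _ 0 sequentially x] by simp
  have bounds: "x \<le> log (real n) (real (card (levels n x)))
      \<and> log (real n) (real (card (levels n x))) \<le> x + ln 2 / ln (real n)" if "n \<ge> 2" for n
  proof -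
    have base: "1 < real n" and pow: "0 < real n powr x" using that by auto
    have card: "real n powr x \<le> real (card (levels n x))" "real (card (levels n x)) \<le> 2 * real n powr x"
      using card_levels_bounds[of n x] that assms by auto
    then have card_pos: "0 < real (card (levels n x))" using pow by linarith
    have "x = log (real n) (real n powr x)" using base by simp
    also have "\<dots> \<le> log (real n) (real (card (levels n x)))"
      using log_le_cancel_iff[OF base pow card_pos] card(1) by blast
    finally have lower: "x \<le> log (real n) (real (card (levels n x)))" .
    have "log (real n) (real (card (levels n x))) \<le> log (real n) (2 * real n powr x)"
      using log_le_cancel_iff[OF base card_pos] card(2) pow by simp
    also have "\<dots> = log (real n) 2 + x"
      using base pow by (simp add: log_mult_pos)
    also have "\<dots> = x + ln 2 / ln (real n)" by (simp add: log_def)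
    finally show ?thesis using lower by simp
  qed
  have "\<forall>\<^sub>F n in sequentially. x \<le> log (real n) (real (card (levels n x)))
      \<and> log (real n) (real (card (levels n x))) \<le> x + ln 2 / ln (real n)"
    using eventually_ge_at_top[of "2::nat"] by (rule eventually_mono) (rule bounds)
  then show "\<forall>\<^sub>F n in sequentially. x \<le> log (real n) (real (card (levels n x)))"
    and "\<forall>\<^sub>F n in sequentially. log (real n) (real (card (levels n x))) \<le> x + ln 2 / ln (real n)"
    by (auto elim: eventually_mono)
qed (rule tendsto_const)

lemma log_prod_power:
  assumes "finite I" "\<And>i. i \<in> I \<Longrightarrow> a i > 0"
  shows "log b (\<Prod>i\<in>I. a i ^ c i) = (\<Sum>i\<in>I. real (c i) * log b (a i))"
proof -
  have "ln (\<Prod>i\<in>I. a i ^ c i) = (\<Sum>i\<in>I. ln (a i ^ c i))"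
    using assms by (intro ln_prod) (auto dest!: assms(2))
  also have "\<dots> = (\<Sum>i\<in>I. real (c i) * ln (a i))" by (simp add: ln_realpow)
  finally show ?thesis by (simp add: log_def sum_divide_distrib)
qed

text \<open>Taking logarithms in the counting formula: log_n hom_\<phi>(F, T_n) is the sum over A of
  CC(F|\<phi>\<inverse>(A)) log_n |levels n (q A)|; all factors are positive since n^q(A) \<ge> 1.\<close>
lemma log_hom_over_eq_sum:
  assumes "finite VG" "finite VF" "EF \<subseteq> VF \<times> VF" "\<phi> \<in> homs VF EF VG EG"
    and q_nonneg: "\<And>A. A \<subseteq> VG \<Longrightarrow> q A \<ge> 0" and "n \<ge> 1"
  shows "log (real n) (real (hom_over VF EF VG EG q \<phi> n)) =
           (\<Sum>A\<in>Pow VG. real (CC EF (\<phi> -` A \<inter> VF)) * log (real n) (real (card (levels n (q A)))))"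
proof -
  have levels_pos: "0 < real (card (levels n (q A)))" if "A \<in> Pow VG" for A
  proof -
    have "q A \<ge> 0" using q_nonneg that by blast
    moreover have "0 < real n powr q A" using \<open>n \<ge> 1\<close> by simp
    ultimately show ?thesis using card_levels_bounds(1)[OF \<open>n \<ge> 1\<close>, of "q A"] by linarith
  qed
  show ?thesis unfolding hom_over_eq_prod[OF assms(1-4)]
    using log_prod_power[OF finite_Pow_iff[THEN iffD2, OF assms(1)] levels_pos] by simp
qed

theorem lemma6p1:
  fixes VG :: "'a set" and EG :: "('a \<times> 'a) set"
    and VF :: "'b set" and EF :: "('b \<times> 'b) set"
    and q :: "'a set \<Rightarrow> real" and \<phi> :: "'b \<Rightarrow> 'a"
  assumes "is_graph VG EG" and "is_graph VF EF"
    and "q \<in> Qset VG EG"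
    and "\<phi> \<in> homs VF EF VG EG"
  shows "(\<lambda>n. log (real n) (real (hom_over VF EF VG EG q \<phi> n)))
           \<longlonglongrightarrow> (\<Sum>A\<in>Pow VG. q A * real (CC EF (\<phi> -` A \<inter> VF)))"
proof -
  have fin: "finite VG" "finite VF" "EF \<subseteq> VF \<times> VF" using assms(1,2) unfolding is_graph_def by auto
  have q_nonneg: "q A \<ge> 0" if "A \<subseteq> VG" for A using assms(3) that unfolding Qset_def by auto
  define c where "c A = real (CC EF (\<phi> -` A \<inter> VF))" for A
  have "(\<lambda>n. \<Sum>A\<in>Pow VG. c A * log (real n) (real (card (levels n (q A)))))
      \<longlonglongrightarrow> (\<Sum>A\<in>Pow VG. c A * q A)"
    by (rule tendsto_sum) (auto intro!: tendsto_mult_left log_card_levels_tendsto q_nonneg)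
  moreover have "\<forall>\<^sub>F n in sequentially. (\<Sum>A\<in>Pow VG. c A * log (real n) (real (card (levels n (q A)))))
      = log (real n) (real (hom_over VF EF VG EG q \<phi> n))"
    using eventually_ge_at_top[of "1::nat"] by (rule eventually_mono)
      (simp add: log_hom_over_eq_sum[OF fin assms(4) q_nonneg] c_def)
  ultimately have "(\<lambda>n. log (real n) (real (hom_over VF EF VG EG q \<phi> n))) \<longlonglongrightarrow> (\<Sum>A\<in>Pow VG. c A * q A)"
    by (rule Lim_transform_eventually)
  then show ?thesis unfolding c_def by (simp add: mult.commute)
qed

end
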